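(* Let $G=(V,E)$ be a simple undirected graph with $V=\{0,1,\dots,n-1\}$, and let $P\ge 1$ be an integer (the number of processors). Run the space-efficient parallel triangle-counting algorithm (described in the context) on $G$ with $P$ processors. Then the value $T=\sum_{i=0}^{P-1}T_i$ returned by the algorithm equals the exact number of triangles in $G$.
   Context: A triangle in $G$ is a set of three nodes $\{u,v,w\}$ such that $(u,v),(v,w),(w,u)\in E$. For $v\in V$ let $d_v$ be its degree. Define the total order $\prec$ on $V$ by $u\prec v$ iff $d_u<d_v$, or $d_u=d_v$ and $u<v$. For each $v\in V$ let $N_v=\{u: (u,v)\in E,\ v\prec u\}$ (the neighbors of $v$ that are higher in the order $\prec$), stored as a list sorted in ascending order. The algorithm: the node set $V$ is partitioned into $P$ pairwise disjoint sets $V_0,\dots,V_{P-1}$, each consisting of consecutive node labels, with $\bigcup_k V_k=V$. Processor $i$ stores $N_v$ for all $v\in V_i$ and maintains a counter $T_i$, initially $0$. For each $v\in V_i$ and each $u\in N_v$: if $u\in V_i$, processor $i$ adds $|N_v\cap N_u|$ to $T_i$; if $u\in V_j$ with $j\neq i$, processor $i$ sends the list $N_v$ to processor $j$, unless it has already sent $N_v$ to processor $j$ (so for each $v$, $N_v$ is sent at most once to each other processor). Whenever a processor $j$ receives a list $X$ (i.e. $X=N_v$ for some $v$ in another part), it adds $\sum_{u\in X,\ u\in V_j}|N_u\cap X|$ to $T_j$. Every processor processes all messages sent to it (processors broadcast completion notices and each waits until all others have completed and all messages are processed). Finally the algorithm returns $T=\sum_i T_i$. *)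

theory Defs
  imports Main
begin

definition simple_graph :: "nat \<Rightarrow> (nat \<times> nat) set \<Rightarrow> bool" where
  "simple_graph n E \<longleftrightarrow> E \<subseteq> {0..<n} \<times> {0..<n} \<and> sym E \<and> (\<forall>v. (v, v) \<notin> E)"

definition triangles :: "(nat \<times> nat) set \<Rightarrow> nat set set" where
  "triangles E = {t. \<exists>u v w. t = {u, v, w} \<and> (u, v) \<in> E \<and> (v, w) \<in> E \<and> (w, u) \<in> E}"

definition deg :: "nat \<Rightarrow> (nat \<times> nat) set \<Rightarrow> nat \<Rightarrow> nat" where
  "deg n E v = card {u \<in> {0..<n}. (u, v) \<in> E}"

definition prec :: "nat \<Rightarrow> (nat \<times> nat) set \<Rightarrow> nat \<Rightarrow> nat \<Rightarrow> bool" where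
  "prec n E u v \<longleftrightarrow> deg n E u < deg n E v \<or> (deg n E u = deg n E v \<and> u < v)"

definition Nlist :: "nat \<Rightarrow> (nat \<times> nat) set \<Rightarrow> nat \<Rightarrow> nat list" where
  "Nlist n E v = sorted_list_of_set {u \<in> {0..<n}. (u, v) \<in> E \<and> prec n E v u}"

definition valid_partition :: "nat \<Rightarrow> nat \<Rightarrow> (nat \<Rightarrow> nat set) \<Rightarrow> bool" where
  "valid_partition n P Vp \<longleftrightarrow>
     (\<forall>i<P. \<exists>a b. Vp i = {a..<b}) \<and>
     (\<forall>i<P. \<forall>j<P. i \<noteq> j \<longrightarrow> Vp i \<inter> Vp j = {}) \<and>
     (\<Union>i<P. Vp i) = {0..<n}"

definition local_count :: "nat \<Rightarrow> (nat \<times> nat) set \<Rightarrow> (nat \<Rightarrow> nat set) \<Rightarrow> nat \<Rightarrow> nat" where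
  "local_count n E Vp i =
     (\<Sum>v\<in>Vp i. \<Sum>u\<leftarrow>Nlist n E v.
        if u \<in> Vp i then card (set (Nlist n E v) \<inter> set (Nlist n E u)) else 0)"

definition sent :: "nat \<Rightarrow> (nat \<times> nat) set \<Rightarrow> (nat \<Rightarrow> nat set) \<Rightarrow> nat \<Rightarrow> nat \<Rightarrow> nat set" where
  "sent n E Vp i j = {v \<in> Vp i. \<exists>u \<in> set (Nlist n E v). u \<in> Vp j}"

definition receive_value :: "nat \<Rightarrow> (nat \<times> nat) set \<Rightarrow> (nat \<Rightarrow> nat set) \<Rightarrow> nat \<Rightarrow> nat list \<Rightarrow> nat" where
  "receive_value n E Vp j X =
     (\<Sum>u\<leftarrow>X. if u \<in> Vp j then card (set (Nlist n E u) \<inter> set X) else 0)"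

text \<open>Final value of counter T_j after all local work and all received messages
have been processed.\<close>
definition proc_count :: "nat \<Rightarrow> (nat \<times> nat) set \<Rightarrow> nat \<Rightarrow> (nat \<Rightarrow> nat set) \<Rightarrow> nat \<Rightarrow> nat" where
  "proc_count n E P Vp j =
     local_count n E Vp j +
     (\<Sum>i \<in> {0..<P} - {j}. \<Sum>v \<in> sent n E Vp i j. receive_value n E Vp j (Nlist n E v))"

definition algorithm_result :: "nat \<Rightarrow> (nat \<times> nat) set \<Rightarrow> nat \<Rightarrow> (nat \<Rightarrow> nat set) \<Rightarrow> nat" where
  "algorithm_result n E P Vp = (\<Sum>i<P. proc_count n E P Vp i)"

end

theory Submission
  imports Defs
begin

text \<open>Every processor j adds, for each node v and each u \<in> N_v lying in V_j, the number
|N_v \<inter> N_u|: locally if v \<in> V_j, and otherwise upon receiving N_v, which is sent to j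
exactly when such a u exists. Hence T = \<Sum>_v \<Sum>_{u \<in> N_v} |N_v \<inter> N_u|, which counts the
triples v \<prec> u \<prec> w spanning a triangle. Since \<prec> is a strict total order, every
triangle has exactly one such sorted labelling.\<close>

lemma valid_partition_finite:
  assumes "valid_partition n P Vp" and "i < P"
  shows "finite (Vp i)"
proof -
  have "Vp i \<subseteq> {0..<n}" using assms unfolding valid_partition_def by blast
  then show ?thesis by (rule finite_subset) simp
qed

lemma valid_partition_sum_Int:
  assumes vp: "valid_partition n P Vp" and A: "A \<subseteq> {0..<n}"
  shows "(\<Sum>i<P. sum f (A \<inter> Vp i)) = sum f A"
proof -
  have disj: "\<And>i j. i < P \<Longrightarrow> j < P \<Longrightarrow> i \<noteq> j \<Longrightarrow> Vp i \<inter> Vp j = {}"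
    and cover: "(\<Union>i<P. Vp i) = {0..<n}"
    using vp unfolding valid_partition_def by blast+
  have "sum f (\<Union>i<P. A \<inter> Vp i) = (\<Sum>i<P. sum f (A \<inter> Vp i))"
  proof (rule sum.UNION_disjoint)
    show "\<forall>i\<in>{..<P}. finite (A \<inter> Vp i)"
      using valid_partition_finite[OF vp] by blast
    show "\<forall>i\<in>{..<P}. \<forall>j\<in>{..<P}. i \<noteq> j \<longrightarrow> A \<inter> Vp i \<inter> (A \<inter> Vp j) = {}"
      using disj by blast
  qed simp
  moreover have "(\<Union>i<P. A \<inter> Vp i) = A"
    using A by (simp add: Int_UN_distrib[symmetric] cover Int_absorb2)
  ultimately show ?thesis by simp
qed

lemma valid_partition_sum:
  assumes vp: "valid_partition n P Vp"
  shows "(\<Sum>i<P. sum f (Vp i)) = sum f {0..<n}"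
proof -
  have "{0..<n} \<inter> Vp i = Vp i" if "i < P" for i
    using vp that unfolding valid_partition_def by auto
  then show ?thesis
    using valid_partition_sum_Int[OF vp order_refl, of f] by simp
qed

lemma set_Nlist: "set (Nlist n E v) = {u \<in> {0..<n}. (u, v) \<in> E \<and> prec n E v u}"
  unfolding Nlist_def by simp

lemma sum_list_Nlist: "(\<Sum>u\<leftarrow>Nlist n E v. f u) = (\<Sum>u\<in>set (Nlist n E v). f u)"
  unfolding Nlist_def by (simp add: sum_list_distinct_conv_sum_set)

definition contribution :: "nat \<Rightarrow> (nat \<times> nat) set \<Rightarrow> (nat \<Rightarrow> nat set) \<Rightarrow> nat \<Rightarrow> nat \<Rightarrow> nat" where
  "contribution n E Vp j v =
     (\<Sum>u\<in>set (Nlist n E v) \<inter> Vp j. card (set (Nlist n E v) \<inter> set (Nlist n E u)))"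

lemma local_count_eq: "local_count n E Vp j = (\<Sum>v\<in>Vp j. contribution n E Vp j v)"
  unfolding local_count_def contribution_def sum_list_Nlist by (simp add: sum.inter_restrict)

lemma receive_value_eq: "receive_value n E Vp j (Nlist n E v) = contribution n E Vp j v"
proof -
  have "receive_value n E Vp j (Nlist n E v) =
      (\<Sum>u\<in>set (Nlist n E v). if u \<in> Vp j then card (set (Nlist n E v) \<inter> set (Nlist n E u)) else 0)"
    unfolding receive_value_def sum_list_Nlist by (rule sum.cong) (simp_all add: Int_commute)
  then show ?thesis
    unfolding contribution_def by (simp add: sum.inter_restrict)
qed

lemma sum_sent_eq:
  assumes "finite (Vp i)"
  shows "(\<Sum>v\<in>sent n E Vp i j. contribution n E Vp j v) = (\<Sum>v\<in>Vp i. contribution n E Vp j v)"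
  by (rule sum.mono_neutral_left) (use assms in \<open>auto simp: sent_def contribution_def\<close>)

lemma proc_count_eq:
  assumes vp: "valid_partition n P Vp" and j: "j < P"
  shows "proc_count n E P Vp j = (\<Sum>v\<in>{0..<n}. contribution n E Vp j v)"
proof -
  have "proc_count n E P Vp j = (\<Sum>v\<in>Vp j. contribution n E Vp j v) +
      (\<Sum>i\<in>{0..<P} - {j}. \<Sum>v\<in>Vp i. contribution n E Vp j v)"
    unfolding proc_count_def local_count_eq receive_value_eq
    using sum_sent_eq valid_partition_finite[OF vp] by simp
  also have "\<dots> = (\<Sum>i<P. \<Sum>v\<in>Vp i. contribution n E Vp j v)"
    using j by (simp add: sum.remove[of "{0..<P}" j] lessThan_atLeast0)
  also have "\<dots> = (\<Sum>v\<in>{0..<n}. contribution n E Vp j v)"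
    by (rule valid_partition_sum[OF vp])
  finally show ?thesis .
qed

lemma sum_contribution:
  assumes "valid_partition n P Vp"
  shows "(\<Sum>j<P. contribution n E Vp j v) = (\<Sum>u\<in>set (Nlist n E v). card (set (Nlist n E v) \<inter> set (Nlist n E u)))"
  unfolding contribution_def by (rule valid_partition_sum_Int[OF assms]) (auto simp: set_Nlist)

lemma algorithm_result_eq_sequential_count:
  assumes "valid_partition n P Vp"
  shows "algorithm_result n E P Vp =
    (\<Sum>v\<in>{0..<n}. \<Sum>u\<in>set (Nlist n E v). card (set (Nlist n E v) \<inter> set (Nlist n E u)))"
proof -
  have "algorithm_result n E P Vp = (\<Sum>j<P. \<Sum>v\<in>{0..<n}. contribution n E Vp j v)"
    unfolding algorithm_result_def using proc_count_eq[OF assms] by simp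
  also have "\<dots> = (\<Sum>v\<in>{0..<n}. \<Sum>j<P. contribution n E Vp j v)"
    by (rule sum.swap)
  finally show ?thesis using sum_contribution[OF assms] by simp
qed

lemma sorted_triple_unique:
  assumes "irreflp r" "transp r"
    and abc: "r a b" "r b c" and abc': "r a' b'" "r b' c'" and eq: "{a, b, c} = {a', b', c'}"
  shows "(a, b, c) = (a', b', c')"
proof -
  note irrefl = irreflpD[OF \<open>irreflp r\<close>] and trans = transpD[OF \<open>transp r\<close>]
  have least: "x \<in> {a, b, c} \<Longrightarrow> x = a \<or> r a x" "x \<in> {a', b', c'} \<Longrightarrow> x = a' \<or> r a' x" for x
    using abc abc' trans by blast+
  have greatest: "x \<in> {a, b, c} \<Longrightarrow> x = c \<or> r x c" "x \<in> {a', b', c'} \<Longrightarrow> x = c' \<or> r x c'" for x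
    using abc abc' trans by blast+
  have "a = a'"
    using least[of a'] least[of a] eq irrefl trans by blast
  moreover have "c = c'"
    using greatest[of c'] greatest[of c] eq irrefl trans by blast
  moreover have "a \<noteq> b" "b \<noteq> c"
    using abc irrefl by blast+
  ultimately show ?thesis
    using eq by auto
qed

lemma sorted_triple_exists:
  assumes "transp r" "totalp r" and "a \<noteq> b" "b \<noteq> c" "a \<noteq> c"
  shows "\<exists>x y z. {x, y, z} = {a, b, c} \<and> r x y \<and> r y z"
proof -
  have "r a b \<or> r b a" "r b c \<or> r c b" "r a c \<or> r c a"
    using totalpD[OF \<open>totalp r\<close>] assms(3-5) by blast+
  then show ?thesis
  proof (elim disjE)
    assume "r a b" "r b c" then show ?thesis by blast
  next
    assume "r a b" "r c b" "r a c" then show ?thesis by (metis insert_commute)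
  next
    assume "r a b" "r c b" "r c a" then show ?thesis by (metis insert_commute)
  next
    assume "r b a" "r b c" "r a c" then show ?thesis by (metis insert_commute)
  next
    assume "r b a" "r b c" "r c a" then show ?thesis by (metis insert_commute)
  next
    assume "r b a" "r c b" then show ?thesis by (metis insert_commute)
  qed (use transpD[OF \<open>transp r\<close>] in blast)+
qed

definition sorted_triangles :: "(nat \<times> nat) set \<Rightarrow> (nat \<Rightarrow> nat \<Rightarrow> bool) \<Rightarrow> (nat \<times> nat \<times> nat) set" where
  "sorted_triangles E r = {(v, u, w). (v, u) \<in> E \<and> (u, w) \<in> E \<and> (v, w) \<in> E \<and> r v u \<and> r u w}"

lemma inj_on_sorted_triangles:
  assumes "irreflp r" "transp r"
  shows "inj_on (\<lambda>(v, u, w). {v, u, w}) (sorted_triangles E r)"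
proof (rule inj_onI)
  fix x y
  assume "x \<in> sorted_triangles E r" "y \<in> sorted_triangles E r"
    and "(\<lambda>(v, u, w). {v, u, w}) x = (\<lambda>(v, u, w). {v, u, w}) y"
  moreover obtain v u w v' u' w' where "x = (v, u, w)" "y = (v', u', w')"
    by (metis prod_cases3)
  ultimately show "x = y"
    using sorted_triple_unique[OF assms, of v u w v' u' w'] by (simp add: sorted_triangles_def)
qed

lemma image_sorted_triangles:
  assumes "sym E" "irrefl E" "irreflp r" "transp r" "totalp r"
  shows "(\<lambda>(v, u, w). {v, u, w}) ` sorted_triangles E r = triangles E"
proof
  have symE: "(x, y) \<in> E \<Longrightarrow> (y, x) \<in> E" for x y
    using \<open>sym E\<close> by (rule symD)
  show "(\<lambda>(v, u, w). {v, u, w}) ` sorted_triangles E r \<subseteq> triangles E"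
  proof (rule image_subsetI)
    fix x assume "x \<in> sorted_triangles E r"
    then obtain v u w where "x = (v, u, w)" "(v, u) \<in> E" "(u, w) \<in> E" "(w, v) \<in> E"
      using symE unfolding sorted_triangles_def by auto
    then show "(\<lambda>(v, u, w). {v, u, w}) x \<in> triangles E"
      unfolding triangles_def by auto
  qed
  show "triangles E \<subseteq> (\<lambda>(v, u, w). {v, u, w}) ` sorted_triangles E r"
  proof
    fix t assume "t \<in> triangles E"
    then obtain a b c where t: "t = {a, b, c}" and edges: "(a, b) \<in> E" "(b, c) \<in> E" "(c, a) \<in> E"
      unfolding triangles_def by blast
    have "a \<noteq> b" "b \<noteq> c" "a \<noteq> c"
      using edges \<open>irrefl E\<close> by (auto simp: irrefl_def)
    then obtain v u w where vuw: "{v, u, w} = t" "r v u" "r u w"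
      using sorted_triple_exists[OF \<open>transp r\<close> \<open>totalp r\<close>] t by metis
    have "x \<in> t \<Longrightarrow> y \<in> t \<Longrightarrow> x \<noteq> y \<Longrightarrow> (x, y) \<in> E" for x y
      using t edges symE by blast
    moreover have "v \<noteq> u" "u \<noteq> w" "v \<noteq> w"
      using vuw irreflpD[OF \<open>irreflp r\<close>] transpD[OF \<open>transp r\<close>] by metis+
    ultimately have "(v, u, w) \<in> sorted_triangles E r"
      using vuw unfolding sorted_triangles_def by auto
    then show "t \<in> (\<lambda>(v, u, w). {v, u, w}) ` sorted_triangles E r"
      using vuw(1) by force
  qed
qed

lemma card_triangles_eq_card_sorted_triangles:
  assumes "sym E" "irrefl E" "irreflp r" "transp r" "totalp r"
  shows "card (triangles E) = card (sorted_triangles E r)"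
  using card_image[OF inj_on_sorted_triangles] image_sorted_triangles assms by metis

lemma irreflp_prec: "irreflp (prec n E)"
  by (rule irreflpI) (simp add: prec_def)

lemma transp_prec: "transp (prec n E)"
  by (rule transpI) (auto simp: prec_def)

lemma totalp_prec: "totalp (prec n E)"
  by (rule totalpI) (auto simp: prec_def)

lemma sequential_count_eq_card_sorted_triangles:
  assumes "simple_graph n E"
  shows "(\<Sum>v\<in>{0..<n}. \<Sum>u\<in>set (Nlist n E v). card (set (Nlist n E v) \<inter> set (Nlist n E u)))
    = card (sorted_triangles E (prec n E))"
proof -
  let ?N = "\<lambda>v. set (Nlist n E v)"
  have "(\<Sum>v\<in>{0..<n}. \<Sum>u\<in>?N v. card (?N v \<inter> ?N u)) = card (SIGMA v:{0..<n}. SIGMA u:?N v. ?N v \<inter> ?N u)"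
    by (simp add: card_SigmaI)
  also have "(SIGMA v:{0..<n}. SIGMA u:?N v. ?N v \<inter> ?N u) = sorted_triangles E (prec n E)"
    using assms transpD[OF transp_prec]
    unfolding simple_graph_def sorted_triangles_def set_Nlist by (auto dest: symD)
  finally show ?thesis .
qed

theorem theorem1:
  fixes n P :: nat and E :: "(nat \<times> nat) set" and Vp :: "nat \<Rightarrow> nat set"
  assumes "simple_graph n E"
    and "P \<ge> 1"
    and "valid_partition n P Vp"
  shows "algorithm_result n E P Vp = card (triangles E)"
proof -
  have "sym E" "irrefl E"
    using \<open>simple_graph n E\<close> by (auto simp: simple_graph_def irrefl_def)
  have "algorithm_result n E P Vp = card (sorted_triangles E (prec n E))"
    using algorithm_result_eq_sequential_count[OF \<open>valid_partition n P Vp\<close>]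
      sequential_count_eq_card_sorted_triangles[OF \<open>simple_graph n E\<close>] by simp
  also have "\<dots> = card (triangles E)"
    using card_triangles_eq_card_sorted_triangles[OF \<open>sym E\<close> \<open>irrefl E\<close> irreflp_prec transp_prec totalp_prec] by simp
  finally show ?thesis .
qed

end
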